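(* Let $\mathbb X,\mathbb Y_1,\mathbb Y_2,\mathbb X^\sharp$ be sets, $c:\mathbb X\times\mathbb X^\sharp\to\overline{\mathbb R}$ a coupling, $\phi:\mathbb Y_1\times\mathbb X\times\mathbb Y_2\to\overline{\mathbb R}$, and $g_1:\mathbb Y_1\to\overline{\mathbb R}$, $g_2:\mathbb Y_2\to\overline{\mathbb R}$. Suppose there exist $\Gamma_1:\mathbb X^\sharp\times\mathbb Y_1\to\overline{\mathbb R}$ and $\Gamma_2:\mathbb X^\sharp\times\mathbb Y_2\to\overline{\mathbb R}$ such that $$\sup_{x\in\mathbb X}\big(c(x,x^\sharp)\mathbin{\underset{\cdot}{+}}(-\phi(y_1,x,y_2))\big)=\Gamma_1(x^\sharp,y_1)\mathbin{\underset{\cdot}{+}}\Gamma_2(x^\sharp,y_2)\quad\text{for all }(x^\sharp,y_1,y_2)\in\mathbb X^\sharp\times\mathbb Y_1\times\mathbb Y_2.$$ Then for all $x^\sharp\in\mathbb X^\sharp$, $$(g_1\square^{\phi}g_2)^{c}(x^\sharp)=\sup_{y_1\in\mathbb Y_1}\big(\Gamma_1(x^\sharp,y_1)\mathbin{\underset{\cdot}{+}}(-g_1(y_1))\big)\mathbin{\underset{\cdot}{+}}\sup_{y_2\in\mathbb Y_2}\big(\Gamma_2(x^\sharp,y_2)\mathbin{\underset{\cdot}{+}}(-g_2(y_2))\big).$$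
   Context: $\overline{\mathbb R}=[-\infty,+\infty]$. The Moreau lower addition $\mathbin{\underset{\cdot}{+}}$ is usual addition extended by $(+\infty)\mathbin{\underset{\cdot}{+}}(-\infty)=(-\infty)\mathbin{\underset{\cdot}{+}}(+\infty)=-\infty$; the Moreau upper addition $\mathbin{\overset{\cdot}{+}}$ is usual addition extended by $(+\infty)\mathbin{\overset{\cdot}{+}}(-\infty)=(-\infty)\mathbin{\overset{\cdot}{+}}(+\infty)=+\infty$. The generalized inf-convolution is $(g_1\square^{\phi}g_2)(x)=\inf_{y_1,y_2}\big(g_1(y_1)\mathbin{\overset{\cdot}{+}}\phi(y_1,x,y_2)\mathbin{\overset{\cdot}{+}} g_2(y_2)\big)$, and for $h:\mathbb X\to\overline{\mathbb R}$, $h^{c}(x^\sharp)=\sup_{x}\big(c(x,x^\sharp)\mathbin{\underset{\cdot}{+}}(-h(x))\big)$. *)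

theory Defs
  imports "HOL-Library.Extended_Real"
begin

definition lower_add :: "ereal \<Rightarrow> ereal \<Rightarrow> ereal" (infixl "+\<^sub>l" 65) where
  "lower_add a b = (if (a = \<infinity> \<and> b = -\<infinity>) \<or> (a = -\<infinity> \<and> b = \<infinity>) then -\<infinity> else a + b)"

definition upper_add :: "ereal \<Rightarrow> ereal \<Rightarrow> ereal" (infixl "+\<^sub>u" 65) where
  "upper_add a b = (if (a = \<infinity> \<and> b = -\<infinity>) \<or> (a = -\<infinity> \<and> b = \<infinity>) then \<infinity> else a + b)"

definition gen_infconv ::
  "('y1 \<Rightarrow> ereal) \<Rightarrow> ('y1 \<Rightarrow> 'x \<Rightarrow> 'y2 \<Rightarrow> ereal) \<Rightarrow> ('y2 \<Rightarrow> ereal) \<Rightarrow> 'x \<Rightarrow> ereal" where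
  "gen_infconv g1 \<phi> g2 x = (INF p \<in> (UNIV :: ('y1 \<times> 'y2) set).
      g1 (fst p) +\<^sub>u \<phi> (fst p) x (snd p) +\<^sub>u g2 (snd p))"

definition c_conj :: "('x \<Rightarrow> 'xs \<Rightarrow> ereal) \<Rightarrow> ('x \<Rightarrow> ereal) \<Rightarrow> 'xs \<Rightarrow> ereal" where
  "c_conj c h xs = (SUP x \<in> (UNIV :: 'x set). c x xs +\<^sub>l (- h x))"

end

theory Submission
  imports Defs
begin

text \<open>Since \<open>-(a +\<^sub>u b) = -a +\<^sub>l -b\<close>, the c-conjugate of the inf-convolution is
  a supremum over \<open>(x, y1, y2)\<close> of lower sums. Lower addition commutes with arbitrary suprema
  (for the empty supremum this needs \<open>\<infinity> +\<^sub>l -\<infinity> = -\<infinity>\<close>, which is why the lower addition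
  is the right one), so the supremum over \<open>x\<close> can be taken innermost, where the hypothesis
  replaces it by \<open>\<Gamma>1 +\<^sub>l \<Gamma>2\<close>; after regrouping, the remaining supremum over
  \<open>(y1, y2)\<close> splits into the two factors.\<close>

lemma lower_add_commute: "a +\<^sub>l b = b +\<^sub>l a"
  unfolding lower_add_def by (auto simp: add.commute)

lemma lower_add_assoc: "(a +\<^sub>l b) +\<^sub>l c = a +\<^sub>l (b +\<^sub>l c)"
  unfolding lower_add_def by (cases a; cases b; cases c) auto

interpretation lower_add: abel_semigroup lower_add
  by unfold_locales (rule lower_add_assoc, rule lower_add_commute)

lemma uminus_upper_add: "- (a +\<^sub>u b) = - a +\<^sub>l - b"
  unfolding lower_add_def upper_add_def by (cases a; cases b) auto

lemma PInf_lower_add: "\<infinity> +\<^sub>l b = (if b = -\<infinity> then -\<infinity> else \<infinity>)"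
  unfolding lower_add_def by (cases b) auto

lemma MInf_lower_add: "-\<infinity> +\<^sub>l b = -\<infinity>"
  unfolding lower_add_def by (cases b) auto

lemma real_lower_add: "ereal r +\<^sub>l b = ereal r + b"
  unfolding lower_add_def by simp

lemma SUP_UNIV_prod: "(SUP p. f p :: 'c :: complete_lattice) = (SUP a. SUP b. f (a, b))"
proof (rule antisym)
  show "(SUP p. f p) \<le> (SUP a. SUP b. f (a, b))"
    by (auto intro!: SUP_least intro: SUP_upper2)
  show "(SUP a. SUP b. f (a, b)) \<le> (SUP p. f p)"
    by (auto intro!: SUP_least SUP_upper)
qed

lemma lower_add_SUP: "a +\<^sub>l (SUP i\<in>I. f i) = (SUP i\<in>I. a +\<^sub>l f i)"
proof (cases "I = {}")
  case True
  then show ?thesis by (simp add: lower_add_def bot_ereal_def)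
next
  case False
  show ?thesis
  proof (cases a)
    case (real r)
    then show ?thesis
      using SUP_ereal_add_left[OF False, of a f] by (simp add: real_lower_add add.commute)
  next
    case PInf
    show ?thesis
    proof (cases "\<forall>i\<in>I. f i = -\<infinity>")
      case True
      then show ?thesis
        using False PInf by (simp add: PInf_lower_add)
    next
      case False
      then obtain i where i: "i \<in> I" "f i \<noteq> -\<infinity>"
        by blast
      then have "(SUP i\<in>I. f i) \<noteq> -\<infinity>"
        by (metis SUP_upper ereal_infty_less_eq(2))
      moreover have "(SUP i\<in>I. \<infinity> +\<^sub>l f i) = \<infinity>"
        using SUP_upper[OF i(1), of "\<lambda>i. \<infinity> +\<^sub>l f i"] i by (simp add: PInf_lower_add)
      ultimately show ?thesis
        using PInf by (simp add: PInf_lower_add)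
    qed
  next
    case MInf
    then show ?thesis
      using False by (simp add: MInf_lower_add)
  qed
qed

lemma SUP_lower_add_SUP:
  "(SUP i\<in>I. f i) +\<^sub>l (SUP j\<in>J. g j) = (SUP i\<in>I. SUP j\<in>J. f i +\<^sub>l g j)"
proof -
  have "(SUP i\<in>I. f i) +\<^sub>l (SUP j\<in>J. g j) = (SUP i\<in>I. f i +\<^sub>l (SUP j\<in>J. g j))"
    using lower_add_SUP[of "SUP j\<in>J. g j" f I] by (simp add: lower_add.commute)
  then show ?thesis
    by (simp add: lower_add_SUP)
qed

lemma uminus_gen_infconv:
  "- gen_infconv g1 \<phi> g2 x = (SUP y1. SUP y2. (- g1 y1 +\<^sub>l - g2 y2) +\<^sub>l - \<phi> y1 x y2)"
proof -
  have "- gen_infconv g1 \<phi> g2 x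
      = (SUP p. - (g1 (fst p) +\<^sub>u \<phi> (fst p) x (snd p) +\<^sub>u g2 (snd p)))"
    unfolding gen_infconv_def by (rule ereal_SUP_uminus_eq[symmetric])
  also have "\<dots> = (SUP p. (- g1 (fst p) +\<^sub>l - g2 (snd p)) +\<^sub>l - \<phi> (fst p) x (snd p))"
    by (simp only: uminus_upper_add lower_add.assoc lower_add.commute lower_add.left_commute)
  finally show ?thesis
    by (simp only: SUP_UNIV_prod fst_conv snd_conv)
qed

lemma c_conj_gen_infconv:
  "c_conj c (gen_infconv g1 \<phi> g2) xs
     = (SUP y1. SUP y2. (- g1 y1 +\<^sub>l - g2 y2) +\<^sub>l (SUP x. c x xs +\<^sub>l - \<phi> y1 x y2))"
proof -
  have "c_conj c (gen_infconv g1 \<phi> g2) xs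
      = (SUP x. SUP y1. SUP y2. (- g1 y1 +\<^sub>l - g2 y2) +\<^sub>l (c x xs +\<^sub>l - \<phi> y1 x y2))"
    unfolding c_conj_def uminus_gen_infconv lower_add_SUP
    by (simp only: lower_add.left_commute)
  also have "\<dots> = (SUP y1. SUP y2. SUP x. (- g1 y1 +\<^sub>l - g2 y2) +\<^sub>l (c x xs +\<^sub>l - \<phi> y1 x y2))"
    by (subst SUP_commute) (subst SUP_commute, rule refl)
  finally show ?thesis
    by (simp only: lower_add_SUP)
qed

theorem proposition3:
  fixes c :: "'x \<Rightarrow> 'xs \<Rightarrow> ereal"
    and \<phi> :: "'y1 \<Rightarrow> 'x \<Rightarrow> 'y2 \<Rightarrow> ereal"
    and g1 :: "'y1 \<Rightarrow> ereal" and g2 :: "'y2 \<Rightarrow> ereal"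
    and \<Gamma>1 :: "'xs \<Rightarrow> 'y1 \<Rightarrow> ereal" and \<Gamma>2 :: "'xs \<Rightarrow> 'y2 \<Rightarrow> ereal"
  assumes "\<And>xs y1 y2. (SUP x \<in> (UNIV :: 'x set). c x xs +\<^sub>l (- \<phi> y1 x y2))
              = \<Gamma>1 xs y1 +\<^sub>l \<Gamma>2 xs y2"
  shows "\<forall>xs. c_conj c (gen_infconv g1 \<phi> g2) xs
           = (SUP y1 \<in> (UNIV :: 'y1 set). \<Gamma>1 xs y1 +\<^sub>l (- g1 y1))
             +\<^sub>l (SUP y2 \<in> (UNIV :: 'y2 set). \<Gamma>2 xs y2 +\<^sub>l (- g2 y2))"
proof
  fix xs
  have "c_conj c (gen_infconv g1 \<phi> g2) xs
      = (SUP y1. SUP y2. (- g1 y1 +\<^sub>l - g2 y2) +\<^sub>l (\<Gamma>1 xs y1 +\<^sub>l \<Gamma>2 xs y2))"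
    by (simp only: c_conj_gen_infconv assms)
  also have "\<dots> = (SUP y1. SUP y2. (\<Gamma>1 xs y1 +\<^sub>l - g1 y1) +\<^sub>l (\<Gamma>2 xs y2 +\<^sub>l - g2 y2))"
    by (simp only: lower_add.assoc lower_add.commute lower_add.left_commute)
  finally show "c_conj c (gen_infconv g1 \<phi> g2) xs
      = (SUP y1. \<Gamma>1 xs y1 +\<^sub>l - g1 y1) +\<^sub>l (SUP y2. \<Gamma>2 xs y2 +\<^sub>l - g2 y2)"
    by (simp only: SUP_lower_add_SUP)
qed

end
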